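(* Let $L \subseteq \Sigma^*$ be a commutative star-free language. Then for every $\Gamma \subseteq \Sigma$ the language $\pi_\Gamma(L)$ is commutative and star-free.
   Context: $L$ is commutative if for every $w \in L$, every word $u$ with $|u|_a = |w|_a$ for all letters $a$ also lies in $L$ ($|u|_a$ = number of occurrences of $a$ in $u$). Star-free languages over an alphabet are the smallest class containing $\{\varepsilon\}$, the full monoid and the singletons $\{a\}$, closed under Boolean operations and concatenation. For $\Gamma \subseteq \Sigma$, $\pi_\Gamma : \Sigma^* \to \Gamma^*$ is the homomorphism with $\pi_\Gamma(x) = x$ for $x \in \Gamma$ and $\pi_\Gamma(x) = \varepsilon$ otherwise, applied elementwise to languages. *)

theory Defs
  imports Main
begin

definition conc :: "'a list set \<Rightarrow> 'a list set \<Rightarrow> 'a list set" where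
  "conc L M = {u @ v | u v. u \<in> L \<and> v \<in> M}"

inductive star_free :: "'a set \<Rightarrow> 'a list set \<Rightarrow> bool" for S :: "'a set" where
  sf_eps: "star_free S {[]}"
| sf_full: "star_free S (lists S)"
| sf_letter: "a \<in> S \<Longrightarrow> star_free S {[a]}"
| sf_compl: "star_free S L \<Longrightarrow> star_free S (lists S - L)"
| sf_union: "star_free S L \<Longrightarrow> star_free S M \<Longrightarrow> star_free S (L \<union> M)"
| sf_inter: "star_free S L \<Longrightarrow> star_free S M \<Longrightarrow> star_free S (L \<inter> M)"
| sf_conc: "star_free S L \<Longrightarrow> star_free S M \<Longrightarrow> star_free S (conc L M)"

definition commutative_lang :: "'a list set \<Rightarrow> bool" where
  "commutative_lang L \<longleftrightarrow>
     (\<forall>w \<in> L. \<forall>u. (\<forall>a. count_list u a = count_list w a) \<longrightarrow> u \<in> L)"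

definition proj :: "'a set \<Rightarrow> 'a list \<Rightarrow> 'a list" where
  "proj G w = filter (\<lambda>x. x \<in> G) w"

end

theory Submission
  imports Defs "HOL-Library.FuncSet"
begin

text \<open>A star-free language is insensitive to the exact length of a long block of one letter:
  for some threshold \<open>n\<close>, \<open>x a\<^sup>m z \<in> L \<longleftrightarrow> x a\<^sup>m\<^sup>' z \<in> L\<close> whenever \<open>m, m' \<ge> n\<close>.
  For a commutative language this means that membership of a word only depends on its letter
  counts truncated at \<open>n\<close>. Erasing letters preserves this property (pad a word of
  \<open>\<Gamma>\<^sup>*\<close> with the erased part of a witness), and a sublanguage of \<open>\<Gamma>\<^sup>*\<close> with this property is
  commutative and a finite union of sets \<open>{v. \<forall>a. min |v|\<^sub>a n = k\<^sub>a}\<close>, which are star-free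
  because \<open>{v. |v|\<^sub>a \<ge> k} = (\<Gamma>\<^sup>* a)\<^sup>k \<Gamma>\<^sup>*\<close>.\<close>

lemma count_list_replicate [simp]:
  "count_list (replicate m b) a = (if a = b then m else 0)"
  by (induction m) auto

lemma count_list_filter:
  "count_list (filter P w) a = (if P a then count_list w a else 0)"
  by (induction w) auto

lemma count_list_removeAll [simp]:
  "count_list (removeAll b w) a = (if a = b then 0 else count_list w a)"
  by (induction w) auto

lemma conc_memI: "u \<in> L \<Longrightarrow> v \<in> M \<Longrightarrow> u @ v \<in> conc L M"
  unfolding conc_def by blast

lemma conc_memE:
  assumes "w \<in> conc L M"
  obtains u v where "w = u @ v" "u \<in> L" "v \<in> M"
  using assms unfolding conc_def by blast

lemma append_eq_append_replicate_cases:
  assumes "u @ v = x @ replicate m a @ z"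
  obtains (left) y where "x = u @ y" "v = y @ replicate m a @ z"
    | (middle) i j where "i + j = m" "u = x @ replicate i a" "v = replicate j a @ z"
    | (right) y where "z = y @ v" "u = x @ replicate m a @ y"
proof -
  from assms obtain us where
    "u = x @ us \<and> us @ v = replicate m a @ z \<or> u @ us = x \<and> v = us @ replicate m a @ z"
    by (auto simp: append_eq_append_conv2)
  then show thesis
  proof
    assume u: "u = x @ us \<and> us @ v = replicate m a @ z"
    then obtain ws where
      "us = replicate m a @ ws \<and> ws @ v = z \<or> us @ ws = replicate m a \<and> v = ws @ z"
      by (auto simp: append_eq_append_conv2)
    then show thesis
    proof
      assume "us = replicate m a @ ws \<and> ws @ v = z"
      then show thesis using u right by auto
    next
      assume ws: "us @ ws = replicate m a \<and> v = ws @ z"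
      then have "us = replicate (length us) a" "ws = replicate (length ws) a"
        by (metis Un_iff in_set_replicate replicate_length_same set_append)+
      moreover have "length us + length ws = m"
        using ws by (metis length_append length_replicate)
      ultimately show thesis using u ws middle by metis
    qed
  next
    assume "u @ us = x \<and> v = us @ replicate m a @ z"
    then show thesis using left by auto
  qed
qed

section \<open>Pumping a single letter\<close>

definition letter_pumpable :: "nat \<Rightarrow> 'a list set \<Rightarrow> bool" where
  "letter_pumpable n L \<longleftrightarrow> (\<forall>x z a m m'. n \<le> m \<longrightarrow> n \<le> m' \<longrightarrow>
      (x @ replicate m a @ z \<in> L \<longleftrightarrow> x @ replicate m' a @ z \<in> L))"

lemma letter_pumpableI:
  assumes "\<And>x z a m m'. n \<le> m \<Longrightarrow> n \<le> m' \<Longrightarrow>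
             x @ replicate m a @ z \<in> L \<Longrightarrow> x @ replicate m' a @ z \<in> L"
  shows "letter_pumpable n L"
  unfolding letter_pumpable_def using assms by blast

lemma letter_pumpableD:
  "letter_pumpable n L \<Longrightarrow> n \<le> m \<Longrightarrow> n \<le> m' \<Longrightarrow>
     x @ replicate m a @ z \<in> L \<Longrightarrow> x @ replicate m' a @ z \<in> L"
  unfolding letter_pumpable_def by blast

lemma letter_pumpable_mono: "letter_pumpable n L \<Longrightarrow> n \<le> n' \<Longrightarrow> letter_pumpable n' L"
  unfolding letter_pumpable_def by (meson le_trans)

lemma letter_pumpable_conc:
  assumes L: "letter_pumpable nL L" and M: "letter_pumpable nM M"
  shows "letter_pumpable (nL + nM + 1) (conc L M)"
proof (rule letter_pumpableI)
  fix x z a m m'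
  assume m: "nL + nM + 1 \<le> m" and m': "nL + nM + 1 \<le> m'"
    and mem: "x @ replicate m a @ z \<in> conc L M"
  from mem obtain u v where uv: "u \<in> L" "v \<in> M" "u @ v = x @ replicate m a @ z"
    by (rule conc_memE) simp
  from uv(3) show "x @ replicate m' a @ z \<in> conc L M"
  proof (cases rule: append_eq_append_replicate_cases)
    case (left y)
    have "nM \<le> m" "nM \<le> m'" using m m' by simp_all
    then have "y @ replicate m' a @ z \<in> M"
      using letter_pumpableD[OF M] uv(2) left(2) by blast
    then show ?thesis using conc_memI[OF uv(1)] left(1) by fastforce
  next
    case (right y)
    have "nL \<le> m" "nL \<le> m'" using m m' by simp_all
    then have "x @ replicate m' a @ y \<in> L"
      using letter_pumpableD[OF L] uv(1) right(2) by blast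
    then show ?thesis using conc_memI[OF _ uv(2)] right(1) by fastforce
  next
    case (middle i j)
    have u: "x @ replicate i a @ [] \<in> L" and v: "[] @ replicate j a @ z \<in> M"
      using uv middle by simp_all
    \<comment> \<open>One of the two blocks is long enough to absorb the change of length.\<close>
    obtain i' j' where ij': "i' + j' = m'" "x @ replicate i' a @ [] \<in> L" "[] @ replicate j' a @ z \<in> M"
    proof (cases "i < nL")
      case True
      have "nM \<le> j" "nM \<le> m' - i" using True middle(1) m m' by linarith+
      then have "[] @ replicate (m' - i) a @ z \<in> M"
        using letter_pumpableD[OF M _ _ v] by blast
      moreover have "i + (m' - i) = m'" using True m' by linarith
      ultimately show thesis using that u by blast
    next
      case False
      have "nL \<le> i" "nL \<le> m' - min j nM" using False m' by linarith+
      then have "x @ replicate (m' - min j nM) a @ [] \<in> L"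
        using letter_pumpableD[OF L _ _ u] by blast
      moreover have "nM \<le> j \<Longrightarrow> [] @ replicate nM a @ z \<in> M"
        using letter_pumpableD[OF M _ _ v] by blast
      then have "[] @ replicate (min j nM) a @ z \<in> M"
        using v by (cases "j \<le> nM") (simp_all add: min_def)
      moreover have "(m' - min j nM) + min j nM = m'" using m' by linarith
      ultimately show thesis using that by blast
    qed
    have "x @ replicate m' a @ z = (x @ replicate i' a) @ (replicate j' a @ z)"
      by (simp flip: ij'(1) add: replicate_add)
    then show ?thesis using conc_memI ij'(2,3) by fastforce
  qed
qed

lemma star_free_letter_pumpable: "star_free S L \<Longrightarrow> \<exists>n. letter_pumpable n L"
proof (induction rule: star_free.induct)
  case sf_eps
  show ?case by (rule exI[of _ 1], rule letter_pumpableI) auto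
next
  case sf_full
  show ?case by (rule exI[of _ 1], rule letter_pumpableI) auto
next
  case (sf_letter a)
  have "letter_pumpable 2 {[a]}"
  proof (rule letter_pumpableI)
    fix x z b m m'
    assume m: "2 \<le> m" and mem: "x @ replicate m b @ z \<in> {[a]}"
    from m have "2 \<le> length (x @ replicate m b @ z)" by simp
    moreover have "length (x @ replicate m b @ z) = 1" using mem by simp
    ultimately have False by simp
    then show "x @ replicate m' b @ z \<in> {[a]}" ..
  qed
  then show ?case ..
next
  case (sf_compl L)
  then obtain n where "letter_pumpable (max n 1) L"
    using letter_pumpable_mono by (meson max.cobounded1)
  then have "letter_pumpable (max n 1) (lists S - L)"
  proof (intro letter_pumpableI DiffI)
    fix x z a m m'
    assume m: "max n 1 \<le> m" "max n 1 \<le> m'" and mem: "x @ replicate m a @ z \<in> lists S - L"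
    then have "a \<in> S" by (cases m) auto
    then show "x @ replicate m' a @ z \<in> lists S" using mem by auto
    show "x @ replicate m' a @ z \<notin> L"
      using letter_pumpableD[OF \<open>letter_pumpable (max n 1) L\<close> m(2,1)] mem by blast
  qed
  then show ?case ..
next
  case (sf_union L M)
  then obtain n1 n2 where "letter_pumpable n1 L" "letter_pumpable n2 M" by blast
  then have "letter_pumpable (max n1 n2) L" "letter_pumpable (max n1 n2) M"
    using letter_pumpable_mono by fastforce+
  then show ?case unfolding letter_pumpable_def by blast
next
  case (sf_inter L M)
  then obtain n1 n2 where "letter_pumpable n1 L" "letter_pumpable n2 M" by blast
  then have "letter_pumpable (max n1 n2) L" "letter_pumpable (max n1 n2) M"
    using letter_pumpable_mono by fastforce+
  then show ?case unfolding letter_pumpable_def by blast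
next
  case (sf_conc L M)
  then show ?case using letter_pumpable_conc by blast
qed

section \<open>Commutative languages with letter pumping\<close>

definition count_threshold_eq :: "nat \<Rightarrow> 'a list \<Rightarrow> 'a list \<Rightarrow> bool" where
  "count_threshold_eq n u v \<longleftrightarrow> (\<forall>a. min (count_list u a) n = min (count_list v a) n)"

lemma commutative_langD:
  "commutative_lang L \<Longrightarrow> w \<in> L \<Longrightarrow> (\<And>a. count_list u a = count_list w a) \<Longrightarrow> u \<in> L"
  unfolding commutative_lang_def by blast

lemma commutative_letter_pumpable_change_count:
  assumes comm: "commutative_lang L" and pump: "letter_pumpable n L" and w: "w \<in> L"
    and "n \<le> count_list w b" "n \<le> m"
  shows "replicate m b @ removeAll b w \<in> L"
proof -
  have "[] @ replicate (count_list w b) b @ removeAll b w \<in> L"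
    by (rule commutative_langD[OF comm w]) simp
  then show ?thesis using letter_pumpableD[OF pump] assms(4,5) by fastforce
qed

lemma commutative_letter_pumpable_change_long_counts:
  assumes comm: "commutative_lang L" and pump: "letter_pumpable n L" and "finite A"
  shows "w \<in> L \<Longrightarrow> \<forall>a. a \<notin> A \<longrightarrow> count_list w a = count_list w' a \<Longrightarrow>
    \<forall>a\<in>A. n \<le> count_list w a \<and> n \<le> count_list w' a \<Longrightarrow> w' \<in> L"
  using \<open>finite A\<close>
proof (induction A arbitrary: w rule: finite_induct)
  case empty
  then show ?case using commutative_langD[OF comm] by simp
next
  case (insert b A)
  let ?w = "replicate (count_list w' b) b @ removeAll b w"
  have "?w \<in> L"
    using commutative_letter_pumpable_change_count[OF comm pump insert.prems(1)] insert.prems(3)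
    by blast
  moreover have "\<forall>a. a \<notin> A \<longrightarrow> count_list ?w a = count_list w' a"
    using insert.prems(2) by auto
  moreover have "\<forall>a\<in>A. n \<le> count_list ?w a \<and> n \<le> count_list w' a"
    using insert.prems(3) by auto
  ultimately show ?case by (rule insert.IH)
qed

lemma commutative_letter_pumpable_threshold_closed:
  assumes comm: "commutative_lang L" and pump: "letter_pumpable n L"
    and "w \<in> L" and eq: "count_threshold_eq n w w'"
  shows "w' \<in> L"
proof -
  let ?A = "{a \<in> set w \<union> set w'. count_list w a \<noteq> count_list w' a}"
  have "finite ?A" by simp
  moreover have "\<forall>a. a \<notin> ?A \<longrightarrow> count_list w a = count_list w' a"
    by (metis (mono_tags, lifting) UnCI count_notin mem_Collect_eq)
  moreover have "\<forall>a\<in>?A. n \<le> count_list w a \<and> n \<le> count_list w' a"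
  proof
    fix a assume "a \<in> ?A"
    moreover have "min (count_list w a) n = min (count_list w' a) n"
      using eq unfolding count_threshold_eq_def by blast
    ultimately show "n \<le> count_list w a \<and> n \<le> count_list w' a"
      by (auto simp: min_def split: if_splits)
  qed
  ultimately show ?thesis
    using commutative_letter_pumpable_change_long_counts[OF comm pump _ \<open>w \<in> L\<close>] by blast
qed

section \<open>Languages determined by truncated letter counts\<close>

lemma count_ge_Suc_eq_conc:
  assumes "a \<in> S"
  shows "{v \<in> lists S. Suc k \<le> count_list v a} =
    conc (conc (lists S) {[a]}) {v \<in> lists S. k \<le> count_list v a}"
    (is "?lhs = conc ?prefix ?rhs")
proof
  show "conc ?prefix ?rhs \<subseteq> ?lhs"
  proof
    fix v assume "v \<in> conc ?prefix ?rhs"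
    then obtain p q where v: "v = p @ q" "p \<in> ?prefix" "q \<in> ?rhs"
      by (rule conc_memE)
    from v(2) obtain r b where r: "p = r @ b" "r \<in> lists S" "b \<in> {[a]}"
      by (rule conc_memE)
    show "v \<in> ?lhs" using v(3) r(2,3) assms unfolding v(1) r(1) by auto
  qed
next
  show "?lhs \<subseteq> conc ?prefix ?rhs"
  proof
    fix v assume v: "v \<in> ?lhs"
    then have "count_list v a = Suc (count_list v a - 1)" by auto
    from count_list_Suc_split_first[OF this] obtain pref rest
      where split: "v = pref @ a # rest" and count_rest: "count_list rest a = count_list v a - 1"
      by blast
    have "pref \<in> lists S" "rest \<in> lists S" using v unfolding split by simp_all
    then have "pref @ [a] \<in> ?prefix" using assms by (intro conc_memI) simp_all
    moreover have "rest \<in> ?rhs" using v count_rest \<open>rest \<in> lists S\<close> by auto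
    ultimately have "(pref @ [a]) @ rest \<in> conc ?prefix ?rhs" by (rule conc_memI)
    then show "v \<in> conc ?prefix ?rhs" by (simp add: split)
  qed
qed

lemma star_free_count_ge:
  assumes "a \<in> S"
  shows "star_free S {v \<in> lists S. k \<le> count_list v a}"
proof (induction k)
  case 0
  then show ?case by (simp add: sf_full)
next
  case (Suc k)
  then show ?case
    unfolding count_ge_Suc_eq_conc[OF assms] by (intro sf_conc sf_full sf_letter assms)
qed

lemma star_free_empty: "star_free S {}"
  using sf_compl[OF sf_full] by simp

lemma star_free_count_min_eq:
  assumes "a \<in> S"
  shows "star_free S {v \<in> lists S. min (count_list v a) n = k}"
proof -
  consider "k < n" | "k = n" | "n < k" by linarith
  then show ?thesis
  proof cases
    case 1
    then have "{v \<in> lists S. min (count_list v a) n = k} =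
        {v \<in> lists S. k \<le> count_list v a} \<inter>
        (lists S - {v \<in> lists S. Suc k \<le> count_list v a})"
      by auto
    then show ?thesis by (simp add: sf_inter sf_compl star_free_count_ge assms)
  next
    case 2
    then have "{v \<in> lists S. min (count_list v a) n = k} = {v \<in> lists S. n \<le> count_list v a}"
      by auto
    then show ?thesis by (simp add: star_free_count_ge assms)
  next
    case 3
    then have "{v \<in> lists S. min (count_list v a) n = k} = {}" by auto
    then show ?thesis using star_free_empty by metis
  qed
qed

lemma star_free_lists_INT:
  "finite I \<Longrightarrow> (\<And>i. i \<in> I \<Longrightarrow> star_free S (f i)) \<Longrightarrow> star_free S (lists S \<inter> (\<Inter>i\<in>I. f i))"
proof (induction I rule: finite_induct)
  case empty
  then show ?case by (simp add: sf_full)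
next
  case (insert i I)
  have "lists S \<inter> (\<Inter>j\<in>insert i I. f j) = f i \<inter> (lists S \<inter> (\<Inter>j\<in>I. f j))" by auto
  then show ?case using insert by (simp add: sf_inter)
qed

lemma star_free_Union:
  "finite F \<Longrightarrow> (\<And>X. X \<in> F \<Longrightarrow> star_free S X) \<Longrightarrow> star_free S (\<Union>F)"
  by (induction F rule: finite_induct) (simp_all add: star_free_empty sf_union)

definition count_threshold_closed :: "nat \<Rightarrow> 'a set \<Rightarrow> 'a list set \<Rightarrow> bool" where
  "count_threshold_closed n S K \<longleftrightarrow>
     (\<forall>u\<in>K. \<forall>v\<in>lists S. count_threshold_eq n u v \<longrightarrow> v \<in> K)"

lemma count_threshold_eq_listsI:
  assumes "u \<in> lists S" "v \<in> lists S"
    and "\<And>a. a \<in> S \<Longrightarrow> min (count_list u a) n = min (count_list v a) n"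
  shows "count_threshold_eq n u v"
  unfolding count_threshold_eq_def
proof
  fix a show "min (count_list u a) n = min (count_list v a) n"
  proof (cases "a \<in> S")
    case False
    then have "a \<notin> set u" "a \<notin> set v" using assms(1,2) by auto
    then show ?thesis by simp
  qed (rule assms(3))
qed

lemma commutative_lang_if_count_threshold_closed:
  assumes "K \<subseteq> lists S" and closed: "count_threshold_closed n S K"
  shows "commutative_lang K"
  unfolding commutative_lang_def
proof (intro ballI allI impI)
  fix u v assume "u \<in> K" and counts: "\<forall>a. count_list v a = count_list u a"
  then have "set v = set u" by (metis count_list_0_iff set_eq_iff)
  then have "v \<in> lists S" using \<open>u \<in> K\<close> assms(1) by auto
  moreover have "count_threshold_eq n u v"
    using counts unfolding count_threshold_eq_def by simp
  ultimately show "v \<in> K" using closed \<open>u \<in> K\<close> unfolding count_threshold_closed_def by blast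
qed

lemma star_free_if_count_threshold_closed:
  assumes "finite S" and "K \<subseteq> lists S" and closed: "count_threshold_closed n S K"
  shows "star_free S K"
proof -
  define atom where
    "atom f = lists S \<inter> (\<Inter>a\<in>S. {v \<in> lists S. min (count_list v a) n = f a})" for f
  define cap where "cap u = restrict (\<lambda>a. min (count_list u a) n) S" for u
  have "K = \<Union>(atom ` cap ` K)"
  proof
    show "K \<subseteq> \<Union>(atom ` cap ` K)"
    proof
      fix u assume "u \<in> K"
      with assms(2) have "u \<in> atom (cap u)" unfolding atom_def cap_def by auto
      with \<open>u \<in> K\<close> show "u \<in> \<Union>(atom ` cap ` K)" by blast
    qed
    show "\<Union>(atom ` cap ` K) \<subseteq> K"
    proof
      fix v assume "v \<in> \<Union>(atom ` cap ` K)"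
      then obtain u where "u \<in> K" and v: "v \<in> atom (cap u)" by blast
      have "v \<in> lists S" using v unfolding atom_def by blast
      have "count_threshold_eq n u v"
      proof (rule count_threshold_eq_listsI)
        show "u \<in> lists S" using \<open>u \<in> K\<close> assms(2) by blast
        show "v \<in> lists S" by fact
        show "min (count_list u a) n = min (count_list v a) n" if "a \<in> S" for a
          using v that unfolding atom_def cap_def by simp
      qed
      with closed \<open>u \<in> K\<close> \<open>v \<in> lists S\<close> show "v \<in> K"
        unfolding count_threshold_closed_def by blast
    qed
  qed
  moreover have "finite (cap ` K)"
  proof (rule finite_subset)
    show "cap ` K \<subseteq> (\<Pi>\<^sub>E a\<in>S. {..n})" unfolding cap_def by auto
    show "finite (\<Pi>\<^sub>E a\<in>S. {..n})" using \<open>finite S\<close> by (simp add: finite_PiE)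
  qed
  moreover have "star_free S (atom f)" for f
    unfolding atom_def
    by (rule star_free_lists_INT[OF \<open>finite S\<close>], rule star_free_count_min_eq)
  ultimately show ?thesis by (metis finite_imageI imageE star_free_Union)
qed

section \<open>Projections\<close>

lemma proj_image_count_threshold_closed:
  assumes comm: "commutative_lang L" and pump: "letter_pumpable n L"
  shows "count_threshold_closed n G (proj G ` L)"
  unfolding count_threshold_closed_def
proof (intro ballI impI)
  fix u v assume "u \<in> proj G ` L" and v: "v \<in> lists G" and eq: "count_threshold_eq n u v"
  then obtain w where w: "w \<in> L" "u = proj G w" by blast
  let ?w = "v @ filter (\<lambda>x. x \<notin> G) w"
  have "count_threshold_eq n w ?w"
    unfolding count_threshold_eq_def
  proof
    fix a
    have "min (count_list (proj G w) a) n = min (count_list v a) n"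
      using eq unfolding w(2) count_threshold_eq_def by blast
    then show "min (count_list w a) n = min (count_list ?w a) n"
      using v by (cases "a \<in> G") (auto simp: proj_def count_list_filter in_lists_conv_set)
  qed
  then have "?w \<in> L" by (rule commutative_letter_pumpable_threshold_closed[OF comm pump w(1)])
  moreover have "proj G ?w = v"
    using v by (simp add: proj_def filter_id_conv in_lists_conv_set)
  ultimately show "v \<in> proj G ` L" by (metis image_eqI)
qed

theorem mainTheorem5:
  fixes Sigma Gamma :: "'a set" and L :: "'a list set"
  assumes "finite Sigma"
    and "star_free Sigma L"
    and "commutative_lang L"
    and "Gamma \<subseteq> Sigma"
  shows "commutative_lang (proj Gamma ` L) \<and> star_free Gamma (proj Gamma ` L)"
proof -
  obtain n where "letter_pumpable n L"
    using star_free_letter_pumpable[OF assms(2)] by blast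
  then have closed: "count_threshold_closed n Gamma (proj Gamma ` L)"
    by (rule proj_image_count_threshold_closed[OF assms(3)])
  have sub: "proj Gamma ` L \<subseteq> lists Gamma"
    by (auto simp: proj_def)
  have "finite Gamma"
    using assms(1,4) by (rule finite_subset[rotated])
  then show ?thesis
    using commutative_lang_if_count_threshold_closed[OF sub closed]
      star_free_if_count_threshold_closed[OF _ sub closed] by blast
qed

end
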